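(* Let $(\mathcal{N},P_S)$ be any channel with state, fix $0\in\mathcal{S}$, and let $M\ge2$, $n\in\mathbb{N}$. Then $\eta^{\mathrm{NS},\mathrm{ca}}_{\mathrm{opt},M,n}(\mathcal{N},P_S)$ equals the optimal value of the following linear program in variables $r_{x^n,y^n,s^n}$ ($x^n\in\mathcal{X}^n,y^n\in\mathcal{Y}^n,s^n\in\mathcal{S}^n$) and $q_{x^n\mid s^n}$ ($x^n\in\mathcal{X}^n,s^n\in\mathcal{S}^n$): maximize $\sum_{x^n,y^n,s^n} r_{x^n,y^n,s^n}\,P_S^{\otimes n}(s^n)\,\mathcal{N}^{\otimes n}(y^n\mid x^n,s^n)$ subject to (i) $r_{x^n,y^n,s^n}\ge0$ for all $(x^n,y^n,s^n)$; (ii) $\sum_{x^n}r_{x^n,y^n,s^n}=\frac1M$ for all $(s^n,y^n)$; (iii) $\sum_{x^n}q_{x^n\mid s^n}=1$ for all $s^n$; (iv) $r_{x^n,y^n,s^n}\le q_{x^n\mid s^n}$ for all $(x^n,y^n,s^n)$; (v) for all $i\in[n-1]$ and all $(x^i,y^n,s^n)$: $\sum_{x_{i+1}^n}r_{x^n,y^n,(s^i,s_{i+1}^n)}=\sum_{x_{i+1}^n}r_{x^n,y^n,(s^i,0^{n-i})}$; (vi) for all $i\in[n-1]$ and all $(x^i,s^n)$: $\sum_{x_{i+1}^n}q_{x^n\mid(s^i,s_{i+1}^n)}=\sum_{x_{i+1}^n}q_{x^n\mid(s^i,0^{n-i})}$, where $0^{k}$ denotes the all-zero sequence of length $k$ and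 in (v),(vi) the sums run over $x_{i+1}^n$ with $x^i$ fixed.
   Context: A channel with state $(\mathcal{N},P_S)$ consists of finite sets $\mathcal{X},\mathcal{Y},\mathcal{S}$, a conditional distribution $\mathcal{N}(y\mid x,s)$ and a state distribution $P_S$; $P_S^{\otimes n}(s^n)=\prod_iP_S(s_i)$, $\mathcal{N}^{\otimes n}(y^n\mid x^n,s^n)=\prod_i\mathcal{N}(y_i\mid x_i,s_i)$. Notation: $x^i=(x_1,\dots,x_i)$, $x_{i+1}^n=(x_{i+1},\dots,x_n)$, $[M]=\{1,\dots,M\}$. An NS-assisted coding scheme with causal CSIT with message size $M$ and blocklength $n$ is a conditional distribution $Z(x^n,\hat w\mid w,s^n,y^n)$ on $\mathcal{X}^n\times[M]$ given $(w,s^n,y^n)\in[M]\times\mathcal{S}^n\times\mathcal{Y}^n$ such that: (C1) $\sum_{\hat w}Z(x^n,\hat w\mid w,s^n,y^n)$ does not depend on $y^n$; (C2) $\sum_{x^n}Z(x^n,\hat w\mid w,s^n,y^n)$ does not depend on $(w,s^n)$; (C3) for each $i\in[n-1]$, $\sum_{x_{i+1}^n}Z(x^n,\hat w\mid w,s^n,y^n)$ does not depend on $s_{i+1}^n$. Its success probability is $\eta(Z)=\frac1M\sum_w\sum_{x^n,s^n,y^n}P_S^{\otimes n}(s^n)\mathcal{N}^{\otimes n}(y^n\mid x^n,s^n)Z(x^n,w\mid w,s^n,y^n)$, and $\eta^{\mathrm{NS},\mathrm{ca}}_{\mathrm{opt},M,n}(\mathcal{N},P_S)$ is the supremum of $\eta(Z)$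 over all such schemes. *)

theory Defs
  imports Complex_Main
begin

text \<open>Sequences of length n over a finite alphabet are lists of length n.
  A channel N(y|x,s) is a function N y x s; a state distribution is P_S.
  Messages range over [M] = {1..M}.\<close>

definition seqs :: "nat \<Rightarrow> 'a list set" where
  "seqs n = {xs. length xs = n}"

definition is_channel_with_state ::
  "('y::finite \<Rightarrow> 'x::finite \<Rightarrow> 's::finite \<Rightarrow> real) \<Rightarrow> ('s \<Rightarrow> real) \<Rightarrow> bool" where
  "is_channel_with_state N PS \<longleftrightarrow>
     (\<forall>y x s. 0 \<le> N y x s) \<and> (\<forall>x s. (\<Sum>y\<in>UNIV. N y x s) = 1) \<and>
     (\<forall>s. 0 \<le> PS s) \<and> (\<Sum>s\<in>UNIV. PS s) = 1"

definition state_n :: "('s \<Rightarrow> real) \<Rightarrow> 's list \<Rightarrow> real" where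
  "state_n PS ss = (\<Prod>i<length ss. PS (ss ! i))"

definition chan_n :: "('y \<Rightarrow> 'x \<Rightarrow> 's \<Rightarrow> real) \<Rightarrow> 'y list \<Rightarrow> 'x list \<Rightarrow> 's list \<Rightarrow> real" where
  "chan_n N ys xs ss = (\<Prod>i<length ys. N (ys ! i) (xs ! i) (ss ! i))"

text \<open>NS-assisted coding scheme with causal CSIT: Z xs wh w ss ys = Z(x^n, wh | w, s^n, y^n).\<close>
definition ns_ca_scheme ::
  "nat \<Rightarrow> nat \<Rightarrow> ('x::finite list \<Rightarrow> nat \<Rightarrow> nat \<Rightarrow> 's::finite list \<Rightarrow> 'y::finite list \<Rightarrow> real) \<Rightarrow> bool" where
  "ns_ca_scheme M n Z \<longleftrightarrow>
     (\<forall>xs\<in>seqs n. \<forall>wh\<in>{1..M}. \<forall>w\<in>{1..M}. \<forall>ss\<in>seqs n. \<forall>ys\<in>seqs n. 0 \<le> Z xs wh w ss ys) \<and>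
     (\<forall>w\<in>{1..M}. \<forall>ss\<in>seqs n. \<forall>ys\<in>seqs n.
        (\<Sum>xs\<in>seqs n. \<Sum>wh\<in>{1..M}. Z xs wh w ss ys) = 1) \<and>
     \<comment> \<open>(C1)\<close>
     (\<forall>xs\<in>seqs n. \<forall>w\<in>{1..M}. \<forall>ss\<in>seqs n. \<forall>ys\<in>seqs n. \<forall>ys'\<in>seqs n.
        (\<Sum>wh\<in>{1..M}. Z xs wh w ss ys) = (\<Sum>wh\<in>{1..M}. Z xs wh w ss ys')) \<and>
     \<comment> \<open>(C2)\<close>
     (\<forall>wh\<in>{1..M}. \<forall>w\<in>{1..M}. \<forall>w'\<in>{1..M}. \<forall>ss\<in>seqs n. \<forall>ss'\<in>seqs n. \<forall>ys\<in>seqs n.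
        (\<Sum>xs\<in>seqs n. Z xs wh w ss ys) = (\<Sum>xs\<in>seqs n. Z xs wh w' ss' ys)) \<and>
     \<comment> \<open>(C3): for i in [n-1], the sum over x_{i+1}^n (with x^i = a fixed) depends on s^n only via s^i\<close>
     (\<forall>i\<in>{1..n-1}. \<forall>a\<in>seqs i. \<forall>wh\<in>{1..M}. \<forall>w\<in>{1..M}. \<forall>ss\<in>seqs n. \<forall>ss'\<in>seqs n. \<forall>ys\<in>seqs n.
        take i ss = take i ss' \<longrightarrow>
        (\<Sum>xs\<in>{xs\<in>seqs n. take i xs = a}. Z xs wh w ss ys) =
        (\<Sum>xs\<in>{xs\<in>seqs n. take i xs = a}. Z xs wh w ss' ys))"

definition success_prob ::
  "nat \<Rightarrow> nat \<Rightarrow> ('y::finite \<Rightarrow> 'x::finite \<Rightarrow> 's::finite \<Rightarrow> real) \<Rightarrow> ('s \<Rightarrow> real) \<Rightarrow>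
   ('x list \<Rightarrow> nat \<Rightarrow> nat \<Rightarrow> 's list \<Rightarrow> 'y list \<Rightarrow> real) \<Rightarrow> real" where
  "success_prob M n N PS Z = (1 / real M) * (\<Sum>w\<in>{1..M}. \<Sum>xs\<in>seqs n. \<Sum>ss\<in>seqs n. \<Sum>ys\<in>seqs n.
      state_n PS ss * chan_n N ys xs ss * Z xs w w ss ys)"

definition eta_opt_ns_ca ::
  "nat \<Rightarrow> nat \<Rightarrow> ('y::finite \<Rightarrow> 'x::finite \<Rightarrow> 's::finite \<Rightarrow> real) \<Rightarrow> ('s \<Rightarrow> real) \<Rightarrow> real" where
  "eta_opt_ns_ca M n N PS =
     Sup (success_prob M n N PS ` {Z :: 'x list \<Rightarrow> nat \<Rightarrow> nat \<Rightarrow> 's list \<Rightarrow> 'y list \<Rightarrow> real. ns_ca_scheme M n Z})"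

text \<open>The linear program; s0 is the distinguished state 0.\<close>
definition lp_feasible ::
  "nat \<Rightarrow> nat \<Rightarrow> 's::finite \<Rightarrow> ('x::finite list \<Rightarrow> 'y::finite list \<Rightarrow> 's list \<Rightarrow> real) \<Rightarrow> ('x list \<Rightarrow> 's list \<Rightarrow> real) \<Rightarrow> bool" where
  "lp_feasible M n s0 r q \<longleftrightarrow>
     (\<forall>xs\<in>seqs n. \<forall>ys\<in>seqs n. \<forall>ss\<in>seqs n. 0 \<le> r xs ys ss) \<and>
     (\<forall>ss\<in>seqs n. \<forall>ys\<in>seqs n. (\<Sum>xs\<in>seqs n. r xs ys ss) = 1 / real M) \<and>
     (\<forall>ss\<in>seqs n. (\<Sum>xs\<in>seqs n. q xs ss) = 1) \<and>
     (\<forall>xs\<in>seqs n. \<forall>ys\<in>seqs n. \<forall>ss\<in>seqs n. r xs ys ss \<le> q xs ss) \<and>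
     (\<forall>i\<in>{1..n-1}. \<forall>a\<in>seqs i. \<forall>ys\<in>seqs n. \<forall>ss\<in>seqs n.
        (\<Sum>xs\<in>{xs\<in>seqs n. take i xs = a}. r xs ys ss) =
        (\<Sum>xs\<in>{xs\<in>seqs n. take i xs = a}. r xs ys (take i ss @ replicate (n - i) s0))) \<and>
     (\<forall>i\<in>{1..n-1}. \<forall>a\<in>seqs i. \<forall>ss\<in>seqs n.
        (\<Sum>xs\<in>{xs\<in>seqs n. take i xs = a}. q xs ss) =
        (\<Sum>xs\<in>{xs\<in>seqs n. take i xs = a}. q xs (take i ss @ replicate (n - i) s0)))"

definition lp_objective ::
  "nat \<Rightarrow> ('y::finite \<Rightarrow> 'x::finite \<Rightarrow> 's::finite \<Rightarrow> real) \<Rightarrow> ('s \<Rightarrow> real) \<Rightarrow>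
   ('x list \<Rightarrow> 'y list \<Rightarrow> 's list \<Rightarrow> real) \<Rightarrow> real" where
  "lp_objective n N PS r = (\<Sum>xs\<in>seqs n. \<Sum>ys\<in>seqs n. \<Sum>ss\<in>seqs n.
      r xs ys ss * state_n PS ss * chan_n N ys xs ss)"

definition lp_value ::
  "nat \<Rightarrow> nat \<Rightarrow> 's::finite \<Rightarrow> ('y::finite \<Rightarrow> 'x::finite \<Rightarrow> 's \<Rightarrow> real) \<Rightarrow> ('s \<Rightarrow> real) \<Rightarrow> real" where
  "lp_value M n s0 N PS =
     Sup ((\<lambda>(r, q). lp_objective n N PS r) `
          {(r :: 'x list \<Rightarrow> 'y list \<Rightarrow> 's list \<Rightarrow> real, q :: 'x list \<Rightarrow> 's list \<Rightarrow> real). lp_feasible M n s0 r q})"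

end

theory Submission
  imports Defs
begin

text \<open>Averaging a scheme Z over the messages gives an LP point: r is the probability that
  the sent message w is decoded correctly with codeword x^n, and q is the averaged encoder
  marginal, which by (C1) does not depend on y^n. (C2) makes the sum of r over x^n equal 1/M,
  r <= q holds because the correct guess is one of the M guesses, and the success probability
  becomes the LP objective. Conversely a feasible (r, q) gives the scheme that decodes correctly
  with weight r and spreads the remaining weight q - r evenly over the M - 1 wrong messages.
  In both directions the causality constraints match because a function of s^n depends only on
  s^i iff it is unchanged when s_{i+1}^n is replaced by 0^{n-i}.\<close>

lemma prefix_determined_iff_pad_invariant:
  assumes "i \<le> n"
  shows "(\<forall>ss\<in>seqs n. \<forall>ss'\<in>seqs n. take i ss = take i ss' \<longrightarrow> f ss = f ss') \<longleftrightarrow>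
         (\<forall>ss\<in>seqs n. f ss = f (take i ss @ replicate (n - i) s0))"
proof
  have pad_in_seqs: "take i ss @ replicate (n - i) s0 \<in> seqs n"
    and take_pad: "take i (take i ss @ replicate (n - i) s0) = take i ss" if "ss \<in> seqs n" for ss
    using that assms by (auto simp: seqs_def)
  assume "\<forall>ss\<in>seqs n. \<forall>ss'\<in>seqs n. take i ss = take i ss' \<longrightarrow> f ss = f ss'"
  then show "\<forall>ss\<in>seqs n. f ss = f (take i ss @ replicate (n - i) s0)"
    using pad_in_seqs take_pad by metis
next
  assume "\<forall>ss\<in>seqs n. f ss = f (take i ss @ replicate (n - i) s0)"
  then show "\<forall>ss\<in>seqs n. \<forall>ss'\<in>seqs n. take i ss = take i ss' \<longrightarrow> f ss = f ss'"
    by metis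
qed

lemma sum_if_eq_else_const:
  fixes a b :: "'a::comm_ring_1"
  assumes "w \<in> A" "finite A"
  shows "(\<Sum>v\<in>A. if v = w then a else b) = a + of_nat (card A - 1) * b"
proof -
  have "(\<Sum>v\<in>A. if v = w then a else b) = a + (\<Sum>v\<in>A - {w}. if v = w then a else b)"
    using assms by (simp add: sum.remove)
  also have "(\<Sum>v\<in>A - {w}. if v = w then a else b) = (\<Sum>v\<in>A - {w}. b)"
    by (rule sum.cong) auto
  finally show ?thesis using assms by simp
qed

lemma ns_ca_schemeD:
  assumes "ns_ca_scheme M n Z"
  shows ns_ca_scheme_nonneg:
      "\<lbrakk>xs \<in> seqs n; wh \<in> {1..M}; w \<in> {1..M}; ss \<in> seqs n; ys \<in> seqs n\<rbrakk> \<Longrightarrow> 0 \<le> Z xs wh w ss ys"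
    and ns_ca_scheme_sum_eq_1:
      "\<lbrakk>w \<in> {1..M}; ss \<in> seqs n; ys \<in> seqs n\<rbrakk> \<Longrightarrow> (\<Sum>xs\<in>seqs n. \<Sum>wh\<in>{1..M}. Z xs wh w ss ys) = 1"
    and ns_ca_scheme_encoder_marginal:
      "\<lbrakk>xs \<in> seqs n; w \<in> {1..M}; ss \<in> seqs n; ys \<in> seqs n; ys' \<in> seqs n\<rbrakk> \<Longrightarrow>
        (\<Sum>wh\<in>{1..M}. Z xs wh w ss ys) = (\<Sum>wh\<in>{1..M}. Z xs wh w ss ys')"
    and ns_ca_scheme_decoder_marginal:
      "\<lbrakk>wh \<in> {1..M}; w \<in> {1..M}; w' \<in> {1..M}; ss \<in> seqs n; ss' \<in> seqs n; ys \<in> seqs n\<rbrakk> \<Longrightarrow>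
        (\<Sum>xs\<in>seqs n. Z xs wh w ss ys) = (\<Sum>xs\<in>seqs n. Z xs wh w' ss' ys)"
    and ns_ca_scheme_causal:
      "\<lbrakk>i \<in> {1..n-1}; a \<in> seqs i; wh \<in> {1..M}; w \<in> {1..M}; ys \<in> seqs n\<rbrakk> \<Longrightarrow>
        \<forall>ss\<in>seqs n. \<forall>ss'\<in>seqs n. take i ss = take i ss' \<longrightarrow>
          (\<Sum>xs\<in>{xs\<in>seqs n. take i xs = a}. Z xs wh w ss ys) =
          (\<Sum>xs\<in>{xs\<in>seqs n. take i xs = a}. Z xs wh w ss' ys)"
  using assms unfolding ns_ca_scheme_def by - (meson+)

lemma lp_feasibleD:
  assumes "lp_feasible M n s0 r q"
  shows lp_feasible_r_nonneg: "\<lbrakk>xs \<in> seqs n; ys \<in> seqs n; ss \<in> seqs n\<rbrakk> \<Longrightarrow> 0 \<le> r xs ys ss"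
    and lp_feasible_r_sum: "\<lbrakk>ss \<in> seqs n; ys \<in> seqs n\<rbrakk> \<Longrightarrow> (\<Sum>xs\<in>seqs n. r xs ys ss) = 1 / real M"
    and lp_feasible_q_sum: "ss \<in> seqs n \<Longrightarrow> (\<Sum>xs\<in>seqs n. q xs ss) = 1"
    and lp_feasible_r_le_q: "\<lbrakk>xs \<in> seqs n; ys \<in> seqs n; ss \<in> seqs n\<rbrakk> \<Longrightarrow> r xs ys ss \<le> q xs ss"
    and lp_feasible_r_causal: "\<lbrakk>i \<in> {1..n-1}; a \<in> seqs i; ys \<in> seqs n\<rbrakk> \<Longrightarrow>
      \<forall>ss\<in>seqs n. (\<Sum>xs\<in>{xs\<in>seqs n. take i xs = a}. r xs ys ss) =
        (\<Sum>xs\<in>{xs\<in>seqs n. take i xs = a}. r xs ys (take i ss @ replicate (n - i) s0))"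
    and lp_feasible_q_causal: "\<lbrakk>i \<in> {1..n-1}; a \<in> seqs i\<rbrakk> \<Longrightarrow>
      \<forall>ss\<in>seqs n. (\<Sum>xs\<in>{xs\<in>seqs n. take i xs = a}. q xs ss) =
        (\<Sum>xs\<in>{xs\<in>seqs n. take i xs = a}. q xs (take i ss @ replicate (n - i) s0))"
  using assms unfolding lp_feasible_def by - (meson+)

definition lp_r_of_scheme ::
  "nat \<Rightarrow> ('x list \<Rightarrow> nat \<Rightarrow> nat \<Rightarrow> 's list \<Rightarrow> 'y list \<Rightarrow> real) \<Rightarrow> 'x list \<Rightarrow> 'y list \<Rightarrow> 's list \<Rightarrow> real" where
  "lp_r_of_scheme M Z xs ys ss = (\<Sum>w\<in>{1..M}. Z xs w w ss ys) / real M"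

definition lp_q_of_scheme ::
  "nat \<Rightarrow> 'y list \<Rightarrow> ('x list \<Rightarrow> nat \<Rightarrow> nat \<Rightarrow> 's list \<Rightarrow> 'y list \<Rightarrow> real) \<Rightarrow> 'x list \<Rightarrow> 's list \<Rightarrow> real" where
  "lp_q_of_scheme M y0 Z xs ss = (\<Sum>w\<in>{1..M}. \<Sum>wh\<in>{1..M}. Z xs wh w ss y0) / real M"

definition scheme_of_lp ::
  "nat \<Rightarrow> ('x list \<Rightarrow> 'y list \<Rightarrow> 's list \<Rightarrow> real) \<Rightarrow> ('x list \<Rightarrow> 's list \<Rightarrow> real) \<Rightarrow>
   'x list \<Rightarrow> nat \<Rightarrow> nat \<Rightarrow> 's list \<Rightarrow> 'y list \<Rightarrow> real" where
  "scheme_of_lp M r q xs wh w ss ys =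
     (if wh = w then r xs ys ss else (q xs ss - r xs ys ss) / (real M - 1))"

lemma success_prob_eq_lp_objective:
  fixes N :: "'y::finite \<Rightarrow> 'x::finite \<Rightarrow> 's::finite \<Rightarrow> real"
  shows "success_prob M n N PS Z = lp_objective n N PS (lp_r_of_scheme M Z)"
proof -
  have "lp_objective n N PS (lp_r_of_scheme M Z) = (1 / real M) *
      (\<Sum>xs\<in>seqs n. \<Sum>ys\<in>seqs n. \<Sum>ss\<in>seqs n. \<Sum>w\<in>{1..M}. state_n PS ss * chan_n N ys xs ss * Z xs w w ss ys)"
    by (simp add: lp_objective_def lp_r_of_scheme_def sum_distrib_left sum_distrib_right sum_divide_distrib mult_ac)
  also have "\<dots> = success_prob M n N PS Z"
    unfolding success_prob_def
    by (simp only: sum.swap[where B = "{1..M}"] sum.swap[of _ "seqs n :: 's list set" "seqs n :: 'y list set"])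
  finally show ?thesis ..
qed

lemma lp_r_of_scheme_of_lp:
  assumes "M > 0"
  shows "lp_r_of_scheme M (scheme_of_lp M r q) = r"
  using assms by (auto simp: fun_eq_iff lp_r_of_scheme_def scheme_of_lp_def)

lemma sum_lp_r_of_scheme:
  assumes Z: "ns_ca_scheme M n Z" and "M \<ge> 1" and ss: "ss \<in> seqs n" and ys: "ys \<in> seqs n"
  shows "(\<Sum>xs\<in>seqs n. lp_r_of_scheme M Z xs ys ss) = 1 / real M"
proof -
  have one: "1 \<in> {1..M}" using \<open>M \<ge> 1\<close> by simp
  have "(\<Sum>xs\<in>seqs n. lp_r_of_scheme M Z xs ys ss) = (\<Sum>w\<in>{1..M}. \<Sum>xs\<in>seqs n. Z xs w w ss ys) / real M"
    unfolding lp_r_of_scheme_def sum_divide_distrib[symmetric] by (simp only: sum.swap[where A = "seqs n"])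
  also have "\<dots> = (\<Sum>w\<in>{1..M}. \<Sum>xs\<in>seqs n. Z xs w 1 ss ys) / real M"
    by (rule arg_cong[where f = "\<lambda>t. t / real M"], rule sum.cong[OF refl],
        rule ns_ca_scheme_decoder_marginal[OF Z _ _ one ss ss ys]) auto
  also have "\<dots> = (\<Sum>xs\<in>seqs n. \<Sum>w\<in>{1..M}. Z xs w 1 ss ys) / real M"
    by (simp only: sum.swap[where A = "{1..M}"])
  also have "\<dots> = 1 / real M"
    using ns_ca_scheme_sum_eq_1[OF Z one ss ys] by simp
  finally show ?thesis .
qed

lemma sum_lp_q_of_scheme:
  assumes Z: "ns_ca_scheme M n Z" and "M \<ge> 1" and y0: "y0 \<in> seqs n" and ss: "ss \<in> seqs n"
  shows "(\<Sum>xs\<in>seqs n. lp_q_of_scheme M y0 Z xs ss) = 1"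
proof -
  have "(\<Sum>xs\<in>seqs n. lp_q_of_scheme M y0 Z xs ss) =
      (\<Sum>w\<in>{1..M}. \<Sum>xs\<in>seqs n. \<Sum>wh\<in>{1..M}. Z xs wh w ss y0) / real M"
    unfolding lp_q_of_scheme_def sum_divide_distrib[symmetric] by (simp only: sum.swap[where A = "seqs n"])
  also have "\<dots> = 1"
    using ns_ca_scheme_sum_eq_1[OF Z _ ss y0] \<open>M \<ge> 1\<close> by simp
  finally show ?thesis .
qed

lemma lp_r_of_scheme_le_lp_q_of_scheme:
  assumes Z: "ns_ca_scheme M n Z"
    and xs: "xs \<in> seqs n" and ys: "ys \<in> seqs n" and ss: "ss \<in> seqs n" and y0: "y0 \<in> seqs n"
  shows "lp_r_of_scheme M Z xs ys ss \<le> lp_q_of_scheme M y0 Z xs ss"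
proof -
  have "(\<Sum>w\<in>{1..M}. Z xs w w ss ys) \<le> (\<Sum>w\<in>{1..M}. \<Sum>wh\<in>{1..M}. Z xs wh w ss ys)"
    by (intro sum_mono member_le_sum) (auto intro: ns_ca_scheme_nonneg[OF Z xs _ _ ss ys])
  also have "\<dots> = (\<Sum>w\<in>{1..M}. \<Sum>wh\<in>{1..M}. Z xs wh w ss y0)"
    by (rule sum.cong[OF refl], rule ns_ca_scheme_encoder_marginal[OF Z xs _ ss ys y0])
  finally show ?thesis
    unfolding lp_r_of_scheme_def lp_q_of_scheme_def by (simp add: divide_right_mono)
qed

lemma lp_r_of_scheme_causal:
  fixes Z :: "'x::finite list \<Rightarrow> nat \<Rightarrow> nat \<Rightarrow> 's::finite list \<Rightarrow> 'y::finite list \<Rightarrow> real"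
  assumes Z: "ns_ca_scheme M n Z" and i: "i \<in> {1..n-1}" and a: "a \<in> seqs i" and ys: "ys \<in> seqs n"
  shows "\<forall>ss\<in>seqs n. (\<Sum>xs\<in>{xs\<in>seqs n. take i xs = a}. lp_r_of_scheme M Z xs ys ss) =
      (\<Sum>xs\<in>{xs\<in>seqs n. take i xs = a}. lp_r_of_scheme M Z xs ys (take i ss @ replicate (n - i) s0))"
proof (rule prefix_determined_iff_pad_invariant[THEN iffD1]; (intro ballI impI)?)
  show "i \<le> n" using i by auto
  fix ss ss' :: "'s list" assume "ss \<in> seqs n" "ss' \<in> seqs n" "take i ss = take i ss'"
  then have "(\<Sum>xs\<in>{xs\<in>seqs n. take i xs = a}. Z xs w w ss ys) =
      (\<Sum>xs\<in>{xs\<in>seqs n. take i xs = a}. Z xs w w ss' ys)" if "w \<in> {1..M}" for w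
    using ns_ca_scheme_causal[OF Z i a that that ys] by blast
  then show "(\<Sum>xs\<in>{xs\<in>seqs n. take i xs = a}. lp_r_of_scheme M Z xs ys ss) =
      (\<Sum>xs\<in>{xs\<in>seqs n. take i xs = a}. lp_r_of_scheme M Z xs ys ss')"
    unfolding lp_r_of_scheme_def sum_divide_distrib[symmetric]
    by (simp only: sum.swap[where A = "{xs\<in>seqs n. take i xs = a}"]) simp
qed

lemma lp_q_of_scheme_causal:
  fixes Z :: "'x::finite list \<Rightarrow> nat \<Rightarrow> nat \<Rightarrow> 's::finite list \<Rightarrow> 'y::finite list \<Rightarrow> real"
  assumes Z: "ns_ca_scheme M n Z" and i: "i \<in> {1..n-1}" and a: "a \<in> seqs i" and y0: "y0 \<in> seqs n"
  shows "\<forall>ss\<in>seqs n. (\<Sum>xs\<in>{xs\<in>seqs n. take i xs = a}. lp_q_of_scheme M y0 Z xs ss) =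
      (\<Sum>xs\<in>{xs\<in>seqs n. take i xs = a}. lp_q_of_scheme M y0 Z xs (take i ss @ replicate (n - i) s0))"
proof (rule prefix_determined_iff_pad_invariant[THEN iffD1]; (intro ballI impI)?)
  show "i \<le> n" using i by auto
  fix ss ss' :: "'s list" assume "ss \<in> seqs n" "ss' \<in> seqs n" "take i ss = take i ss'"
  then have "(\<Sum>xs\<in>{xs\<in>seqs n. take i xs = a}. Z xs wh w ss y0) =
      (\<Sum>xs\<in>{xs\<in>seqs n. take i xs = a}. Z xs wh w ss' y0)" if "w \<in> {1..M}" "wh \<in> {1..M}" for w wh
    using ns_ca_scheme_causal[OF Z i a that(2,1) y0] by blast
  then show "(\<Sum>xs\<in>{xs\<in>seqs n. take i xs = a}. lp_q_of_scheme M y0 Z xs ss) =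
      (\<Sum>xs\<in>{xs\<in>seqs n. take i xs = a}. lp_q_of_scheme M y0 Z xs ss')"
    unfolding lp_q_of_scheme_def sum_divide_distrib[symmetric]
    by (simp only: sum.swap[where A = "{xs\<in>seqs n. take i xs = a}"]) simp
qed

lemma lp_feasible_lp_of_scheme:
  assumes Z: "ns_ca_scheme M n Z" and "M \<ge> 1" and y0: "y0 \<in> seqs n"
  shows "lp_feasible M n s0 (lp_r_of_scheme M Z) (lp_q_of_scheme M y0 Z)"
proof -
  have "0 \<le> lp_r_of_scheme M Z xs ys ss" if "xs \<in> seqs n" "ys \<in> seqs n" "ss \<in> seqs n" for xs ys ss
    using ns_ca_scheme_nonneg[OF Z] that by (auto simp: lp_r_of_scheme_def intro!: sum_nonneg divide_nonneg_nonneg)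
  then show ?thesis
    unfolding lp_feasible_def
    using sum_lp_r_of_scheme[OF Z \<open>M \<ge> 1\<close>] sum_lp_q_of_scheme[OF Z \<open>M \<ge> 1\<close> y0]
      lp_r_of_scheme_le_lp_q_of_scheme[OF Z _ _ _ y0]
      lp_r_of_scheme_causal[OF Z] lp_q_of_scheme_causal[OF Z _ _ y0]
    by blast
qed

lemma sum_scheme_of_lp_decoded:
  assumes "w \<in> {1..M}" and "M \<ge> 2"
  shows "(\<Sum>wh\<in>{1..M}. scheme_of_lp M r q xs wh w ss ys) = q xs ss"
  using sum_if_eq_else_const[OF assms(1), of "r xs ys ss" "(q xs ss - r xs ys ss) / (real M - 1)"] \<open>M \<ge> 2\<close>
  by (simp add: scheme_of_lp_def of_nat_diff)

lemma sum_scheme_of_lp_codewords: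
  assumes F: "lp_feasible M n s0 r q" and "M \<ge> 2" and ss: "ss \<in> seqs n" and ys: "ys \<in> seqs n"
  shows "(\<Sum>xs\<in>seqs n. scheme_of_lp M r q xs wh w ss ys) = 1 / real M"
proof (cases "wh = w")
  case True
  then show ?thesis by (simp add: scheme_of_lp_def lp_feasible_r_sum[OF F ss ys])
next
  case False
  then have "(\<Sum>xs\<in>seqs n. scheme_of_lp M r q xs wh w ss ys) = (1 - 1 / real M) / (real M - 1)"
    by (simp add: scheme_of_lp_def sum_divide_distrib[symmetric] sum_subtractf
        lp_feasible_r_sum[OF F ss ys] lp_feasible_q_sum[OF F ss])
  also have "\<dots> = 1 / real M" using \<open>M \<ge> 2\<close> by (simp add: field_simps)
  finally show ?thesis .
qed

lemma scheme_of_lp_causal: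
  assumes F: "lp_feasible M n s0 r q" and i: "i \<in> {1..n-1}" and a: "a \<in> seqs i" and ys: "ys \<in> seqs n"
    and ss: "ss \<in> seqs n" and ss': "ss' \<in> seqs n" and prefix_eq: "take i ss = take i ss'"
  shows "(\<Sum>xs\<in>{xs\<in>seqs n. take i xs = a}. scheme_of_lp M r q xs wh w ss ys) =
      (\<Sum>xs\<in>{xs\<in>seqs n. take i xs = a}. scheme_of_lp M r q xs wh w ss' ys)"
proof -
  let ?A = "{xs\<in>seqs n. take i xs = a}"
  have "i \<le> n" using i by auto
  have r: "(\<Sum>xs\<in>?A. r xs ys ss) = (\<Sum>xs\<in>?A. r xs ys ss')"
    using prefix_determined_iff_pad_invariant[OF \<open>i \<le> n\<close>, THEN iffD2, OF lp_feasible_r_causal[OF F i a ys]]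
      ss ss' prefix_eq by blast
  have q: "(\<Sum>xs\<in>?A. q xs ss) = (\<Sum>xs\<in>?A. q xs ss')"
    using prefix_determined_iff_pad_invariant[OF \<open>i \<le> n\<close>, THEN iffD2, OF lp_feasible_q_causal[OF F i a]]
      ss ss' prefix_eq by blast
  have "(\<Sum>xs\<in>?A. scheme_of_lp M r q xs wh w t ys) = (if wh = w then (\<Sum>xs\<in>?A. r xs ys t)
      else ((\<Sum>xs\<in>?A. q xs t) - (\<Sum>xs\<in>?A. r xs ys t)) / (real M - 1))" for t
    by (simp add: scheme_of_lp_def sum_divide_distrib[symmetric] sum_subtractf)
  then show ?thesis using r q by simp
qed

lemma ns_ca_scheme_scheme_of_lp:
  assumes F: "lp_feasible M n s0 r q" and "M \<ge> 2"
  shows "ns_ca_scheme M n (scheme_of_lp M r q)"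
proof -
  have "0 \<le> scheme_of_lp M r q xs wh w ss ys" if "xs \<in> seqs n" "ys \<in> seqs n" "ss \<in> seqs n" for xs wh w ss ys
    using lp_feasible_r_nonneg[OF F that] lp_feasible_r_le_q[OF F that] \<open>M \<ge> 2\<close>
    by (simp add: scheme_of_lp_def)
  then show ?thesis
    unfolding ns_ca_scheme_def
    by (auto simp: sum_scheme_of_lp_decoded[OF _ \<open>M \<ge> 2\<close>] sum_scheme_of_lp_codewords[OF F \<open>M \<ge> 2\<close>]
        lp_feasible_q_sum[OF F] simp del: One_nat_def intro: scheme_of_lp_causal[OF F])
qed

theorem mainTheorem3:
  fixes N :: "'y::finite \<Rightarrow> 'x::finite \<Rightarrow> 's::finite \<Rightarrow> real"
    and PS :: "'s \<Rightarrow> real" and s0 :: 's and M n :: nat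
  assumes "is_channel_with_state N PS"
    and "M \<ge> 2"
  shows "eta_opt_ns_ca M n N PS = lp_value M n s0 N PS"
proof -
  let ?schemes = "{Z :: 'x list \<Rightarrow> nat \<Rightarrow> nat \<Rightarrow> 's list \<Rightarrow> 'y list \<Rightarrow> real. ns_ca_scheme M n Z}"
  let ?feasible = "{(r :: 'x list \<Rightarrow> 'y list \<Rightarrow> 's list \<Rightarrow> real, q). lp_feasible M n s0 r q}"
  have "success_prob M n N PS ` ?schemes = (\<lambda>(r, q). lp_objective n N PS r) ` ?feasible"
  proof (intro equalityI subsetI)
    fix v assume "v \<in> success_prob M n N PS ` ?schemes"
    then obtain Z where Z: "ns_ca_scheme M n Z" and v: "v = success_prob M n N PS Z" by blast
    have "lp_feasible M n s0 (lp_r_of_scheme M Z) (lp_q_of_scheme M (replicate n undefined) Z)"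
      using lp_feasible_lp_of_scheme[OF Z] \<open>M \<ge> 2\<close> by (simp add: seqs_def)
    then show "v \<in> (\<lambda>(r, q). lp_objective n N PS r) ` ?feasible"
      unfolding v success_prob_eq_lp_objective by force
  next
    fix v assume "v \<in> (\<lambda>(r, q). lp_objective n N PS r) ` ?feasible"
    then obtain r q where F: "lp_feasible M n s0 r q" and v: "v = lp_objective n N PS r" by auto
    have "v = success_prob M n N PS (scheme_of_lp M r q)"
      using \<open>M \<ge> 2\<close> by (simp add: v success_prob_eq_lp_objective lp_r_of_scheme_of_lp)
    then show "v \<in> success_prob M n N PS ` ?schemes"
      using ns_ca_scheme_scheme_of_lp[OF F \<open>M \<ge> 2\<close>] by blast
  qed
  then show ?thesis unfolding eta_opt_ns_ca_def lp_value_def by simp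
qed

end
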